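(* If $\Lambda=T_1\sqcup\cdots\sqcup T_m$ is a partition of $\Lambda$ into pairwise disjoint nonempty tilings $T_1,\dots,T_m$, then $m\le n-2$.
   Context: Fix an integer $n\ge 3$ and write $[n]=\{1,\dots,n\}$. Let $\Lambda$ be the set of 3-element subsets of $[n]$; a triple $\{i,j,k\}$ with $i<j<k$ is written $ijk$. For a 4-element subset $F=\{i<j<k<l\}$ of $[n]$, the stick of $F$ is the sequence $(ijk,\ ijl,\ ikl,\ jkl)$. A tiling (the inversion set of a rhombus tiling of the zonogon $Z(n;2)$) is a subset $T\subseteq\Lambda$ such that for every 4-element $F\subseteq[n]$, $T\cap\mathrm{stick}(F)$ is an initial segment or a final segment of the stick (empty set and whole stick allowed). *)

theory Defs
  imports Main
begin

definition Lambda :: "nat \<Rightarrow> nat set set" where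
  "Lambda n = {S. S \<subseteq> {1..n} \<and> card S = 3}"

definition stick :: "nat set \<Rightarrow> nat set list" where
  "stick F = (let xs = sorted_list_of_set F;
                  i = xs ! 0; j = xs ! 1; k = xs ! 2; l = xs ! 3
              in [{i,j,k}, {i,j,l}, {i,k,l}, {j,k,l}])"

definition is_tiling :: "nat \<Rightarrow> nat set set \<Rightarrow> bool" where
  "is_tiling n T \<longleftrightarrow> T \<subseteq> Lambda n \<and>
     (\<forall>F. F \<subseteq> {1..n} \<longrightarrow> card F = 4 \<longrightarrow>
        (\<exists>r\<le>4. T \<inter> set (stick F) = set (take r (stick F))
               \<or> T \<inter> set (stick F) = set (drop r (stick F))))"

end

(* Say that a tiling appears at level k if it contains a triple of [k] but none of [k-1].
   The stick condition says: if T contains ijl or ikl but not ijk, then T contains jkl.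
   Applied twice, to the sticks of {i,j,k,k+1} and {j,k-1,k,k+1}, it shows that a tiling
   appearing at level k+1 with a triple {i,j,k+1} must contain {k-1,k,k+1}. As only one of
   the disjoint tilings contains that triple, they appear at pairwise different levels
   among 3, ..., n. *)
theory Submission
  imports Defs "HOL-Library.Disjoint_Sets"
begin

lemma nth_mem_set_take_iff:
  assumes "distinct xs" "q < length xs"
  shows "xs ! q \<in> set (take r xs) \<longleftrightarrow> q < r"
proof
  assume "xs ! q \<in> set (take r xs)"
  then obtain p where "p < length (take r xs)" "take r xs ! p = xs ! q"
    by (auto simp: in_set_conv_nth)
  then have "p = q" "p < r" using assms by (auto simp: nth_eq_iff_index_eq)
  then show "q < r" by simp
next
  assume "q < r"
  then show "xs ! q \<in> set (take r xs)"
    using assms(2) by (metis in_set_conv_nth length_take min_less_iff_conj nth_take)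
qed

lemma nth_mem_set_drop_iff:
  assumes "distinct xs" "q < length xs"
  shows "xs ! q \<in> set (drop r xs) \<longleftrightarrow> r \<le> q"
proof -
  have "xs ! q \<in> set (take r xs) \<union> set (drop r xs)"
    by (metis append_take_drop_id set_append nth_mem assms(2))
  moreover have "set (take r xs) \<inter> set (drop r xs) = {}"
    using assms(1) by (simp add: set_take_disj_set_drop_if_distinct)
  ultimately show ?thesis
    using nth_mem_set_take_iff[OF assms, of r] by auto
qed

lemma segment_contains_later:
  assumes "distinct xs"
    and "S \<inter> set xs = set (take r xs) \<or> S \<inter> set xs = set (drop r xs)"
    and "p < q" "q \<le> q'" "q' < length xs" "xs ! p \<notin> S" "xs ! q \<in> S"
  shows "xs ! q' \<in> S"
  using assms(2)
proof
  assume take: "S \<inter> set xs = set (take r xs)"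
  have "xs ! q \<in> set (take r xs)"
    using take assms(5,7) nth_mem[of q xs] by (metis IntI order.strict_trans1 assms(4))
  then have "p < r"
    using nth_mem_set_take_iff[OF assms(1)] assms(3-5) by simp
  then have "xs ! p \<in> set (take r xs)"
    using nth_mem_set_take_iff[OF assms(1)] assms(3-5) by simp
  then show ?thesis using take assms(6) by blast
next
  assume drop: "S \<inter> set xs = set (drop r xs)"
  have "xs ! q \<in> set (drop r xs)"
    using drop assms(5,7) nth_mem[of q xs] by (metis IntI order.strict_trans1 assms(4))
  then have "r \<le> q'"
    using nth_mem_set_drop_iff[OF assms(1)] assms(3-5) by simp
  then have "xs ! q' \<in> set (drop r xs)"
    using nth_mem_set_drop_iff[OF assms(1)] assms(5) by simp
  then show ?thesis using drop by blast
qed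

lemma stick_eq:
  fixes i j k l :: nat
  assumes "i < j" "j < k" "k < l"
  shows "stick {i,j,k,l} = [{i,j,k}, {i,j,l}, {i,k,l}, {j,k,l}]"
proof -
  have "sorted_list_of_set {i,j,k,l} = [i,j,k,l]"
    using assms by (intro sorted_list_of_set_unique[THEN iffD1]) auto
  then show ?thesis unfolding stick_def by (simp add: Let_def)
qed

lemma tiling_stick_last_mem:
  assumes "is_tiling n T" "1 \<le> i" "i < j" "j < k" "k < l" "l \<le> n"
    and "{i,j,k} \<notin> T" "{i,j,l} \<in> T \<or> {i,k,l} \<in> T"
  shows "{j,k,l} \<in> T"
proof -
  define xs where "xs = stick {i,j,k,l}"
  have xs: "xs = [{i,j,k}, {i,j,l}, {i,k,l}, {j,k,l}]"
    unfolding xs_def using assms(3-5) by (rule stick_eq)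
  have "{i,j,k,l} \<subseteq> {1..n}" "card {i,j,k,l} = 4"
    using assms(2-6) by auto
  then obtain r where segment: "T \<inter> set xs = set (take r xs) \<or> T \<inter> set xs = set (drop r xs)"
    using assms(1) unfolding is_tiling_def xs_def by blast
  have "distinct xs"
    unfolding xs using assms(3-5) by (auto simp: insert_eq_iff doubleton_eq_iff)
  moreover obtain q where "0 < q" "q \<le> 3" "xs ! q \<in> T"
    using assms(8)
  proof
    assume "{i,j,l} \<in> T"
    then show thesis using that[of 1] by (simp add: xs)
  next
    assume "{i,k,l} \<in> T"
    then show thesis using that[of 2] by (simp add: xs)
  qed
  moreover have "3 < length xs" "xs ! 0 \<notin> T" using assms(7) by (simp_all add: xs)
  ultimately have "xs ! 3 \<in> T" using segment_contains_later segment by blast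
  then show ?thesis by (simp add: xs)
qed

lemma card_3_obtain_less:
  fixes S :: "'a::linorder set"
  assumes "card S = 3"
  obtains a b c where "a < b" "b < c" "S = {a, b, c}"
proof -
  have "finite S" using assms by (metis card.infinite zero_neq_numeral)
  have "length (sorted_list_of_set S) = Suc (Suc (Suc 0))" using assms by simp
  then obtain a b c where abc: "sorted_list_of_set S = [a, b, c]"
    by (auto simp: length_Suc_conv simp del: length_sorted_list_of_set)
  have "sorted_wrt (<) [a, b, c]" using strict_sorted_list_of_set[of S] abc by simp
  moreover have "S = {a, b, c}"
    using set_sorted_list_of_set[OF \<open>finite S\<close>] abc by simp
  ultimately show thesis using that[of a b c] by simp
qed

lemma Lambda_empty:
  assumes "k < 3"
  shows "Lambda k = {}"
proof (intro equalityI subsetI)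
  fix S assume "S \<in> Lambda k"
  then have "3 \<le> card {1..k}" using card_mono[of "{1..k}" S] unfolding Lambda_def by auto
  then show "S \<in> {}" using assms by simp
qed simp

lemma Lambda_Suc_diffE:
  assumes "t \<in> Lambda (Suc k)" "t \<notin> Lambda k"
  obtains i j where "1 \<le> i" "i < j" "j \<le> k" "t = {i, j, Suc k}"
proof -
  obtain a b c where abc: "a < b" "b < c" "t = {a, b, c}"
    using assms(1) card_3_obtain_less unfolding Lambda_def by blast
  then have "1 \<le> a" "c \<le> Suc k" using assms(1) unfolding Lambda_def by auto
  moreover have "\<not> c \<le> k" using assms abc unfolding Lambda_def by auto
  ultimately show thesis using that[of a b] abc by (simp add: le_Suc_eq)
qed

lemma tiling_first_meeting_Lambda_Suc:
  assumes tiling: "is_tiling n T" and avoid: "T \<inter> Lambda k = {}"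
    and meet: "T \<inter> Lambda (Suc k) \<noteq> {}"
  shows "{k - 1, k, Suc k} \<in> T"
proof -
  have "T \<subseteq> Lambda n" using tiling unfolding is_tiling_def by blast
  from meet obtain t where t: "t \<in> T" "t \<in> Lambda (Suc k)" by blast
  then have "t \<notin> Lambda k" using avoid by blast
  with t obtain i j where ij: "1 \<le> i" "i < j" "j \<le> k" "{i, j, Suc k} \<in> T"
    by (metis Lambda_Suc_diffE)
  have "Suc k \<le> n"
    using ij(4) \<open>T \<subseteq> Lambda n\<close> unfolding Lambda_def by auto
  have not_in_T: "{a, b, c} \<notin> T" if "1 \<le> a" "a < b" "b < c" "c \<le> k" for a b c
    using avoid that unfolding Lambda_def by (auto simp: card_insert_if)
  obtain j' where j': "1 \<le> j'" "j' < k" "{j', k, Suc k} \<in> T"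
  proof (cases "j = k")
    case True
    then show thesis using that ij by blast
  next
    case False
    then have "{j, k, Suc k} \<in> T"
      using tiling_stick_last_mem[OF tiling, of i j k "Suc k"] not_in_T[of i j k] ij \<open>Suc k \<le> n\<close>
      by simp
    then show thesis using that[of j] ij False by simp
  qed
  show ?thesis
  proof (cases "j' = k - 1")
    case True
    then show ?thesis using j' by simp
  next
    case False
    then show ?thesis
      using tiling_stick_last_mem[OF tiling, of j' "k - 1" k "Suc k"] not_in_T[of j' "k - 1" k]
        j' \<open>Suc k \<le> n\<close>
      by simp
  qed
qed

lemma card_tilings_meeting_Lambda:
  assumes "finite I" "\<And>a. a \<in> I \<Longrightarrow> is_tiling n (T a)" "disjoint_family_on T I"
    and "2 \<le> k"
  shows "card {a \<in> I. T a \<inter> Lambda k \<noteq> {}} \<le> k - 2"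
  using \<open>2 \<le> k\<close>
proof (induction k rule: nat_induct_at_least)
  case base
  then show ?case by (simp add: Lambda_empty)
next
  case (Suc k)
  let ?C = "\<lambda>k. {a \<in> I. T a \<inter> Lambda k \<noteq> {}}"
  let ?top = "{a \<in> I. {k - 1, k, Suc k} \<in> T a}"
  have "?C (Suc k) \<subseteq> ?C k \<union> ?top"
  proof
    fix a assume a: "a \<in> ?C (Suc k)"
    then have "T a \<inter> Lambda k = {} \<Longrightarrow> {k - 1, k, Suc k} \<in> T a"
      using tiling_first_meeting_Lambda_Suc[OF assms(2)] by blast
    then show "a \<in> ?C k \<union> ?top" using a by blast
  qed
  moreover have "card ?top \<le> 1"
    using assms(1,3) by (auto simp: card_le_Suc0_iff_eq disjoint_family_on_def)
  ultimately have "card (?C (Suc k)) \<le> card (?C k) + 1"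
    using assms(1) card_Un_le[of "?C k" ?top] card_mono[of "?C k \<union> ?top" "?C (Suc k)"]
    by simp
  then show ?case using Suc.IH Suc.hyps by simp
qed

theorem mainTheorem13:
  fixes n m :: nat and T :: "nat \<Rightarrow> nat set set"
  assumes "n \<ge> 3"
    and "\<And>a. a \<in> {1..m} \<Longrightarrow> is_tiling n (T a)"
    and "\<And>a. a \<in> {1..m} \<Longrightarrow> T a \<noteq> {}"
    and "\<And>a b. a \<in> {1..m} \<Longrightarrow> b \<in> {1..m} \<Longrightarrow> a \<noteq> b \<Longrightarrow> T a \<inter> T b = {}"
    and "(\<Union>a\<in>{1..m}. T a) = Lambda n"
  shows "m \<le> n - 2"
proof -
  have "disjoint_family_on T {1..m}"
    using assms(4) unfolding disjoint_family_on_def by blast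
  moreover have "T a \<inter> Lambda n \<noteq> {}" if "a \<in> {1..m}" for a
    using assms(2,3)[OF that] unfolding is_tiling_def by auto
  then have "{a \<in> {1..m}. T a \<inter> Lambda n \<noteq> {}} = {1..m}" by blast
  ultimately show ?thesis
    using card_tilings_meeting_Lambda[of "{1..m}" n T n] assms(1,2) by simp
qed

end
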